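(* Let $S$ be a right simple semigroup with no idempotent, let $a\in S$, and let $A=S^1a$. Then $A\setminus\{a\}=Sa$, the $\mathcal{R}$-classes of the semigroup $A$ are exactly $\{a\}$ and $Sa$, and $\mathrm{H}_{\mathcal{R}}(A)=2$.
   Context: A semigroup is right simple if it has no proper right ideals. $S^1$ denotes $S$ with an identity adjoined. For a semigroup $M$, Green's preorder: $u\leq_{\mathcal{R}} v$ iff $uM^1\subseteq vM^1$; $\mathcal{R}$ is the associated equivalence; the $\mathcal{R}$-height $\mathrm{H}_{\mathcal{R}}(M)$ is the supremum of the cardinalities of chains in the poset of $\mathcal{R}$-classes. Here $\mathcal{R}$ and $\mathrm{H}_{\mathcal{R}}$ are taken in the semigroup $A$ itself. *)

theory Defs
  imports Main "HOL-Library.Extended_Nat"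
begin

text \<open>Semigroups are modelled by the type class semigroup_mult; a semigroup
  "inside" a type is given by a carrier set M closed under multiplication.\<close>

definition right_ideal :: "'a::semigroup_mult set \<Rightarrow> 'a set \<Rightarrow> bool" where
  "right_ideal M I \<longleftrightarrow> I \<subseteq> M \<and> I \<noteq> {} \<and> (\<forall>x\<in>I. \<forall>s\<in>M. x * s \<in> I)"

definition right_simple :: "'a::semigroup_mult set \<Rightarrow> bool" where
  "right_simple M \<longleftrightarrow> (\<forall>I. right_ideal M I \<longrightarrow> I = M)"

text \<open>u M^1 = {u} \<union> u M\<close>
definition right_principal :: "'a::semigroup_mult set \<Rightarrow> 'a \<Rightarrow> 'a set" where
  "right_principal M u = insert u ((\<lambda>m. u * m) ` M)"

definition R_le :: "'a::semigroup_mult set \<Rightarrow> 'a \<Rightarrow> 'a \<Rightarrow> bool" where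
  "R_le M u v \<longleftrightarrow> right_principal M u \<subseteq> right_principal M v"

definition R_equiv :: "'a::semigroup_mult set \<Rightarrow> 'a \<Rightarrow> 'a \<Rightarrow> bool" where
  "R_equiv M u v \<longleftrightarrow> R_le M u v \<and> R_le M v u"

definition R_class :: "'a::semigroup_mult set \<Rightarrow> 'a \<Rightarrow> 'a set" where
  "R_class M u = {v \<in> M. R_equiv M u v}"

definition R_classes :: "'a::semigroup_mult set \<Rightarrow> 'a set set" where
  "R_classes M = R_class M ` M"

text \<open>Induced partial order on R-classes (well defined on representatives).\<close>
definition R_class_le :: "'a::semigroup_mult set \<Rightarrow> 'a set \<Rightarrow> 'a set \<Rightarrow> bool" where
  "R_class_le M X Y \<longleftrightarrow> (\<exists>u\<in>X. \<exists>v\<in>Y. R_le M u v)"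

definition R_chain :: "'a::semigroup_mult set \<Rightarrow> 'a set set \<Rightarrow> bool" where
  "R_chain M C \<longleftrightarrow> C \<subseteq> R_classes M \<and> (\<forall>X\<in>C. \<forall>Y\<in>C. R_class_le M X Y \<or> R_class_le M Y X)"

definition ecard :: "'b set \<Rightarrow> enat" where
  "ecard C = (if finite C then enat (card C) else \<infinity>)"

definition R_height :: "'a::semigroup_mult set \<Rightarrow> enat" where
  "R_height M = Sup (ecard ` {C. R_chain M C})"

end

theory Submission
  imports Defs
begin

text \<open>Right simplicity makes every left multiplication u * _ surjective. Hence
  a \<notin> S a (from a = s a and s = a t, the element t a would be idempotent), and in
  A = S^1 a every u generates the principal right ideal u A^1 = {u} \<union> S a. So the
  R-classes of A are {a} and S a, the latter strictly below the former.\<close>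

lemma right_simple_UNIV_surj_mult:
  fixes u :: "'a::semigroup_mult"
  assumes "right_simple (UNIV :: 'a set)"
  shows "surj ((*) u)"
proof -
  have "right_ideal UNIV (range ((*) u))"
    unfolding right_ideal_def by (auto simp: mult.assoc)
  then show ?thesis using assms unfolding right_simple_def by blast
qed

lemma right_simple_no_idempotent_notin_left_multiples:
  fixes a :: "'a::semigroup_mult"
  assumes "right_simple (UNIV :: 'a set)"
    and "\<forall>e::'a. e * e \<noteq> e"
  shows "a \<notin> range (\<lambda>s. s * a)"
proof
  assume "a \<in> range (\<lambda>s. s * a)"
  then obtain s where s: "a = s * a" by blast
  obtain t where t: "s = a * t"
    using right_simple_UNIV_surj_mult[OF assms(1)] by (metis surjD)
  have "(t * a) * (t * a) = t * (a * t * a)" by (simp add: mult.assoc)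
  also have "\<dots> = t * a" using s t by simp
  finally show False using assms(2) by blast
qed

lemma right_principal_left_principal:
  fixes a u :: "'a::semigroup_mult"
  assumes "\<And>v::'a. surj ((*) v)"
  shows "right_principal (insert a (range (\<lambda>s. s * a))) u = insert u (range (\<lambda>s. s * a))"
proof
  show "right_principal (insert a (range (\<lambda>s. s * a))) u \<subseteq> insert u (range (\<lambda>s. s * a))"
    unfolding right_principal_def by (auto simp: mult.assoc[symmetric])
  show "insert u (range (\<lambda>s. s * a)) \<subseteq> right_principal (insert a (range (\<lambda>s. s * a))) u"
  proof
    fix v assume "v \<in> insert u (range (\<lambda>s. s * a))"
    then consider "v = u" | y where "v = y * a" by blast
    then show "v \<in> right_principal (insert a (range (\<lambda>s. s * a))) u"
    proof cases
      case 1
      then show ?thesis unfolding right_principal_def by simp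
    next
      case 2
      obtain z where "y = u * z" using assms by (metis surjD)
      then have "v = u * (z * a)" using 2 by (simp add: mult.assoc)
      then show ?thesis unfolding right_principal_def by blast
    qed
  qed
qed

lemma R_classes_insert_below:
  assumes principal: "\<And>u. right_principal (insert a B) u = insert u B"
    and "a \<notin> B" and "B \<noteq> {}"
  shows "R_classes (insert a B) = {{a}, B}"
    and "R_class_le (insert a B) B {a}"
proof -
  have class_a: "R_class (insert a B) a = {a}"
    using \<open>a \<notin> B\<close> unfolding R_class_def R_equiv_def R_le_def principal by auto
  have class_B: "R_class (insert a B) u = B" if "u \<in> B" for u
    using \<open>a \<notin> B\<close> that unfolding R_class_def R_equiv_def R_le_def principal by auto
  show "R_classes (insert a B) = {{a}, B}"
    unfolding R_classes_def using class_a class_B \<open>B \<noteq> {}\<close> by auto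
  show "R_class_le (insert a B) B {a}"
    using \<open>B \<noteq> {}\<close> unfolding R_class_le_def R_le_def principal by blast
qed

lemma R_class_le_refl:
  assumes "X \<in> R_classes M"
  shows "R_class_le M X X"
proof -
  obtain u where "u \<in> M" and "X = R_class M u"
    using assms unfolding R_classes_def by blast
  then have "u \<in> X"
    unfolding R_class_def R_equiv_def R_le_def by blast
  then show ?thesis
    unfolding R_class_le_def R_le_def by blast
qed

lemma R_chain_R_classes_doubleton:
  assumes classes: "R_classes M = {X, Y}" and "R_class_le M Y X"
  shows "R_chain M (R_classes M)"
proof -
  have "R_class_le M X X" and "R_class_le M Y Y"
    using R_class_le_refl[of _ M] unfolding classes by simp_all
  then show ?thesis
    unfolding R_chain_def classes using \<open>R_class_le M Y X\<close> by blast
qed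

lemma ecard_mono:
  assumes "C \<subseteq> D"
  shows "ecard C \<le> ecard D"
  using assms unfolding ecard_def by (auto intro: card_mono dest: finite_subset)

lemma R_height_eq_ecard_R_classes:
  assumes "R_chain M (R_classes M)"
  shows "R_height M = ecard (R_classes M)"
  unfolding R_height_def
proof (rule antisym)
  show "Sup (ecard ` {C. R_chain M C}) \<le> ecard (R_classes M)"
    by (auto intro!: Sup_least ecard_mono simp: R_chain_def)
  show "ecard (R_classes M) \<le> Sup (ecard ` {C. R_chain M C})"
    using assms by (auto intro: Sup_upper)
qed

lemma ecard_doubleton:
  assumes "X \<noteq> Y"
  shows "ecard {X, Y} = 2"
  using assms unfolding ecard_def by (simp add: numeral_eq_enat)

theorem proposition4p7:
  fixes a :: "'a::semigroup_mult"
  assumes "right_simple (UNIV :: 'a set)"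
    and "\<forall>e::'a. e * e \<noteq> e"
  defines "A \<equiv> insert a (range (\<lambda>s. s * a))"
  shows "A - {a} = range (\<lambda>s. s * a)
    \<and> R_classes A = {{a}, range (\<lambda>s. s * a)}
    \<and> R_height A = 2"
proof -
  define B where "B = range (\<lambda>s. s * a)"
  have "a \<notin> B"
    unfolding B_def using right_simple_no_idempotent_notin_left_multiples[OF assms(1,2)] .
  have "B \<noteq> {}" unfolding B_def by blast
  have principal: "right_principal (insert a B) u = insert u B" for u
    unfolding B_def using right_principal_left_principal right_simple_UNIV_surj_mult[OF assms(1)] .
  have classes: "R_classes A = {{a}, B}" and below: "R_class_le A B {a}"
    unfolding A_def B_def[symmetric]
    using R_classes_insert_below[OF principal \<open>a \<notin> B\<close> \<open>B \<noteq> {}\<close>] by auto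
  have "R_chain A (R_classes A)"
    using classes below by (rule R_chain_R_classes_doubleton)
  then have "R_height A = ecard {{a}, B}"
    using R_height_eq_ecard_R_classes classes by metis
  also have "\<dots> = 2"
    using \<open>a \<notin> B\<close> by (intro ecard_doubleton) blast
  finally have "R_height A = 2" .
  moreover have "A - {a} = B" unfolding A_def B_def[symmetric] using \<open>a \<notin> B\<close> by blast
  ultimately show ?thesis using classes B_def by simp
qed

end
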